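(* Let $(B,\lfloor\cdot,\cdot\rfloor,\|\cdot\|)$ be an SSDB space with quadratic form $q$, and let $f:B\to\mathbb{R}\cup\{+\infty\}$ be a minimal element (with respect to the pointwise order) of the set of convex functions $g:B\to\mathbb{R}\cup\{+\infty\}$ satisfying $g\ge q$ on $B$. Then there is a maximally $q$-positive set $M\subset B$ such that $f=\Phi_M$.
   Context: An SSD space is a pair $(B,\lfloor\cdot,\cdot\rfloor)$ with $B$ a nonzero real vector space and $\lfloor\cdot,\cdot\rfloor$ a symmetric bilinear form; $q(b)=\frac12\lfloor b,b\rfloor$. An SSDB space is a triple $(B,\lfloor\cdot,\cdot\rfloor,\|\cdot\|)$ such that $(B,\lfloor\cdot,\cdot\rfloor)$ is an SSD space, $(B,\|\cdot\|)$ is a Banach space, and $i:B\to B^*$, $i(b)=\lfloor\cdot,b\rfloor$, is a surjective isometry onto $B^*$. A nonempty $A\subset B$ is $q$-positive if $q(b-c)\ge0$ for all $b,c\in A$; maximally $q$-positive if $q$-positive and not properly contained in another $q$-positive set. For nonempty $A$, $\Phi_A(x)=\sup_{a\in A}\{\lfloor x,a\rfloor-q(a)\}$. *)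

theory Defs
  imports "HOL-Analysis.Analysis"
begin

definition SSD :: "('a::real_vector \<Rightarrow> 'a \<Rightarrow> real) \<Rightarrow> bool" where
  "SSD bf \<longleftrightarrow> (\<exists>b::'a. b \<noteq> 0) \<and> bilinear bf \<and> (\<forall>x y. bf x y = bf y x)"

text \<open>SSDB space: SSD space on a Banach space such that i(b) = bf(.,b) is a
  surjective isometry of B onto its dual B* (bounded linear functionals,
  normed by the operator norm).\<close>
definition SSDB :: "('a::banach \<Rightarrow> 'a \<Rightarrow> real) \<Rightarrow> bool" where
  "SSDB bf \<longleftrightarrow> SSD bf
     \<and> (\<forall>b. bounded_linear (\<lambda>x. bf x b))
     \<and> (\<forall>b. onorm (\<lambda>x. bf x b) = norm b)
     \<and> (\<forall>\<phi>::'a \<Rightarrow> real. bounded_linear \<phi> \<longrightarrow> (\<exists>b. \<phi> = (\<lambda>x. bf x b)))"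

definition qf :: "('a \<Rightarrow> 'a \<Rightarrow> real) \<Rightarrow> 'a \<Rightarrow> real" where
  "qf bf b = bf b b / 2"

definition q_positive :: "('a::real_vector \<Rightarrow> 'a \<Rightarrow> real) \<Rightarrow> 'a set \<Rightarrow> bool" where
  "q_positive bf A \<longleftrightarrow> A \<noteq> {} \<and> (\<forall>b\<in>A. \<forall>c\<in>A. qf bf (b - c) \<ge> 0)"

definition max_q_positive :: "('a::real_vector \<Rightarrow> 'a \<Rightarrow> real) \<Rightarrow> 'a set \<Rightarrow> bool" where
  "max_q_positive bf A \<longleftrightarrow> q_positive bf A \<and> (\<forall>A'. q_positive bf A' \<and> A \<subseteq> A' \<longrightarrow> A' = A)"

definition Phi :: "('a \<Rightarrow> 'a \<Rightarrow> real) \<Rightarrow> 'a set \<Rightarrow> 'a \<Rightarrow> ereal" where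
  "Phi bf A x = (SUP a\<in>A. ereal (bf x a - qf bf a))"

text \<open>Convex functions with values in \<real> \<union> {+\<infinity>} (modelled as ereal-valued
  functions never taking the value -\<infinity>).\<close>
definition convex_ext :: "('a::real_vector \<Rightarrow> ereal) \<Rightarrow> bool" where
  "convex_ext g \<longleftrightarrow> (\<forall>x. g x \<noteq> -\<infinity>) \<and>
     (\<forall>x y t. 0 < t \<and> t < 1 \<longrightarrow>
        g (t *\<^sub>R x + (1 - t) *\<^sub>R y) \<le> ereal t * g x + ereal (1 - t) * g y)"

definition convex_majorants :: "('a::real_vector \<Rightarrow> 'a \<Rightarrow> real) \<Rightarrow> ('a \<Rightarrow> ereal) set" where
  "convex_majorants bf = {g. convex_ext g \<and> (\<forall>x. ereal (qf bf x) \<le> g x)}"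

end

theory Submission
  imports Defs
begin

text \<open>Let \<open>M = {a. f a = q a}\<close> be the coincidence set of the minimal convex majorant \<open>f\<close> of \<open>q\<close>.
  Convexity of \<open>f \<ge> q\<close> makes \<open>M\<close> \<open>q\<close>-positive and gives \<open>\<Phi>\<^sub>M \<le> f\<close>. The crux is that every \<open>x\<close>
  has some \<open>a \<in> M\<close> with \<open>q (x - a) \<le> 0\<close>: a sandwich theorem (Hahn--Banach applied to a sublinear
  function built from \<open>f\<close> and \<open>\<parallel>\<cdot>\<parallel>\<^sup>2 / 2\<close>) and the isometry \<open>B \<cong> B\<^sup>*\<close> produce \<open>z = x + b\<close> with
  \<open>f \<ge> \<lfloor>\<cdot>, z\<rfloor> - q z\<close> and \<open>q b \<le> 0\<close>; minimality forces \<open>f z = q z\<close>, because the convex hull of \<open>f\<close>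
  and the value \<open>q z\<close> at \<open>z\<close> is still a convex majorant of \<open>q\<close>. Consequently \<open>\<Phi>\<^sub>M \<ge> q\<close> is a convex
  majorant below \<open>f\<close>, so \<open>f = \<Phi>\<^sub>M\<close>; and any \<open>c\<close> that is \<open>q\<close>-positive with respect to \<open>M\<close>
  satisfies \<open>f c = \<Phi>\<^sub>M c \<le> q c\<close>, i.e. \<open>c \<in> M\<close>.\<close>

section \<open>Hahn--Banach for sublinear functionals\<close>

definition dominated_linear_graph :: "('a::real_vector \<Rightarrow> real) \<Rightarrow> ('a \<times> real) set \<Rightarrow> bool" where
  "dominated_linear_graph p G \<longleftrightarrow> (0, 0) \<in> G
     \<and> (\<forall>x r y s. (x, r) \<in> G \<longrightarrow> (y, s) \<in> G \<longrightarrow> (x + y, r + s) \<in> G)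
     \<and> (\<forall>x r c. (x, r) \<in> G \<longrightarrow> (c *\<^sub>R x, c * r) \<in> G)
     \<and> (\<forall>x r s. (x, r) \<in> G \<longrightarrow> (x, s) \<in> G \<longrightarrow> r = s)
     \<and> (\<forall>x r. (x, r) \<in> G \<longrightarrow> r \<le> p x)"

lemma dominated_linear_graphD:
  assumes "dominated_linear_graph p G"
  shows dominated_linear_graph_zero: "(0, 0) \<in> G"
    and dominated_linear_graph_add: "(x, r) \<in> G \<Longrightarrow> (y, s) \<in> G \<Longrightarrow> (x + y, r + s) \<in> G"
    and dominated_linear_graph_scale: "(x, r) \<in> G \<Longrightarrow> (c *\<^sub>R x, c * r) \<in> G"
    and dominated_linear_graph_unique: "(x, r) \<in> G \<Longrightarrow> (x, s) \<in> G \<Longrightarrow> r = s"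
    and dominated_linear_graph_le: "(x, r) \<in> G \<Longrightarrow> r \<le> p x"
  using assms unfolding dominated_linear_graph_def by blast+

lemma dominated_linear_graph_Union_chain:
  assumes C: "C \<in> chains {G. dominated_linear_graph p G}" and "C \<noteq> {}"
  shows "dominated_linear_graph p (\<Union>C)"
proof -
  have dom: "dominated_linear_graph p G" if "G \<in> C" for G
    using chainsD2[OF C] that by blast
  have common: "\<exists>G\<in>C. u \<in> G \<and> v \<in> G" if "u \<in> \<Union>C" "v \<in> \<Union>C" for u v
    using that chainsD[OF C] by blast
  show ?thesis
    unfolding dominated_linear_graph_def
  proof (intro conjI allI impI)
    show "(0, 0) \<in> \<Union>C"
      using \<open>C \<noteq> {}\<close> dominated_linear_graph_zero[OF dom] by blast
  next
    fix x r y s assume "(x, r) \<in> \<Union>C" "(y, s) \<in> \<Union>C"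
    then show "(x + y, r + s) \<in> \<Union>C"
      using common dominated_linear_graph_add[OF dom] by blast
  next
    fix x r c assume "(x, r) \<in> \<Union>C"
    then show "(c *\<^sub>R x, c * r) \<in> \<Union>C"
      using dominated_linear_graph_scale[OF dom] by blast
  next
    fix x r s assume "(x, r) \<in> \<Union>C" "(x, s) \<in> \<Union>C"
    then show "r = s"
      using common dominated_linear_graph_unique[OF dom] by blast
  next
    fix x r assume "(x, r) \<in> \<Union>C"
    then show "r \<le> p x"
      using dominated_linear_graph_le[OF dom] by blast
  qed
qed

text \<open>The one-dimensional step of Hahn--Banach: a value \<open>a\<close> for the new direction \<open>x\<close> exists
  because \<open>r - p (y - x) \<le> p (z + x) - s\<close> for all points \<open>(y, r)\<close>, \<open>(z, s)\<close> of the graph.\<close>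
lemma dominated_linear_graph_value_bounds:
  assumes sub: "\<And>x y. p (x + y) \<le> p x + p y" and G: "dominated_linear_graph p G"
  obtains a where "\<And>y r. (y, r) \<in> G \<Longrightarrow> r - p (y - x) \<le> a"
    and "\<And>z s. (z, s) \<in> G \<Longrightarrow> a \<le> p (z + x) - s"
proof -
  note G0 = dominated_linear_graph_zero[OF G]
  define S where "S = {r - p (y - x) | y r. (y, r) \<in> G}"
  have S_le: "t \<le> p (z + x) - s" if "t \<in> S" "(z, s) \<in> G" for t z s
  proof -
    obtain y r where yr: "t = r - p (y - x)" "(y, r) \<in> G"
      using \<open>t \<in> S\<close> unfolding S_def by blast
    have "r + s \<le> p (y + z)"
      using dominated_linear_graph_le[OF G dominated_linear_graph_add[OF G yr(2) that(2)]] .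
    also have "\<dots> \<le> p (y - x) + p (z + x)" using sub[of "y - x" "z + x"] by (simp add: algebra_simps)
    finally show ?thesis using yr by simp
  qed
  have "bdd_above S" using S_le[OF _ G0] unfolding bdd_above_def by blast
  then have "r - p (y - x) \<le> Sup S" if "(y, r) \<in> G" for y r
    using that by (intro cSup_upper) (auto simp: S_def)
  moreover have "Sup S \<le> p (z + x) - s" if "(z, s) \<in> G" for z s
    using G0 S_le[OF _ that] by (intro cSup_least) (auto simp: S_def)
  ultimately show ?thesis using that by blast
qed

lemma dominated_linear_graph_extension_value:
  assumes hom: "\<And>c x. c > 0 \<Longrightarrow> p (c *\<^sub>R x) = c * p x"
    and G: "dominated_linear_graph p G"
    and a_ge: "\<And>y r. (y, r) \<in> G \<Longrightarrow> r - p (y - x) \<le> a"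
    and a_le: "\<And>z s. (z, s) \<in> G \<Longrightarrow> a \<le> p (z + x) - s"
    and yr: "(y, r) \<in> G"
  shows "r + c * a \<le> p (y + c *\<^sub>R x)"
proof (cases c "0::real" rule: linorder_cases)
  case less
  have "- c * (r / - c - p (y /\<^sub>R - c - x)) \<le> - c * a"
    using a_ge[OF dominated_linear_graph_scale[OF G yr, of "inverse (- c)"]] less
    by (intro mult_left_mono) (auto simp: divide_inverse mult.commute)
  moreover have "- c * p (y /\<^sub>R - c - x) = p (y + c *\<^sub>R x)"
    using hom[of "- c" "y /\<^sub>R - c - x"] less by (simp add: algebra_simps)
  ultimately show ?thesis using less by (simp add: algebra_simps)
next
  case equal
  then show ?thesis using dominated_linear_graph_le[OF G yr] by simp
next
  case greater
  have "c * a \<le> c * (p (y /\<^sub>R c + x) - r / c)"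
    using a_le[OF dominated_linear_graph_scale[OF G yr, of "inverse c"]] greater
    by (intro mult_left_mono) (auto simp: divide_inverse mult.commute)
  moreover have "c * p (y /\<^sub>R c + x) = p (y + c *\<^sub>R x)"
    using hom[of c "y /\<^sub>R c + x"] greater by (simp add: algebra_simps)
  ultimately show ?thesis using greater by (simp add: algebra_simps)
qed

lemma dominated_linear_graph_extend_by:
  assumes G: "dominated_linear_graph p G" and x: "\<nexists>r. (x, r) \<in> G"
    and a: "\<And>y r c. (y, r) \<in> G \<Longrightarrow> r + c * a \<le> p (y + c *\<^sub>R x)"
  shows "dominated_linear_graph p {(y + c *\<^sub>R x, r + c * a) | y r c. (y, r) \<in> G}"
    (is "dominated_linear_graph p ?G'")
  unfolding dominated_linear_graph_def
proof (intro conjI allI impI)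
  show "(0, 0) \<in> ?G'" using dominated_linear_graph_zero[OF G] by force
next
  fix y r z s assume "(y, r) \<in> ?G'" "(z, s) \<in> ?G'"
  then obtain y1 r1 c1 y2 r2 c2
    where 1: "(y, r) = (y1 + c1 *\<^sub>R x, r1 + c1 * a)" "(y1, r1) \<in> G"
      and 2: "(z, s) = (y2 + c2 *\<^sub>R x, r2 + c2 * a)" "(y2, r2) \<in> G"
    by blast
  then have "(y + z, r + s) = ((y1 + y2) + (c1 + c2) *\<^sub>R x, (r1 + r2) + (c1 + c2) * a)"
    by (simp add: algebra_simps)
  with dominated_linear_graph_add[OF G 1(2) 2(2)] show "(y + z, r + s) \<in> ?G'" by blast
next
  fix y r c assume "(y, r) \<in> ?G'"
  then obtain y1 r1 c1 where 1: "(y, r) = (y1 + c1 *\<^sub>R x, r1 + c1 * a)" "(y1, r1) \<in> G"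
    by blast
  then have "(c *\<^sub>R y, c * r) = (c *\<^sub>R y1 + (c * c1) *\<^sub>R x, c * r1 + (c * c1) * a)"
    by (simp add: algebra_simps)
  with dominated_linear_graph_scale[OF G 1(2)] show "(c *\<^sub>R y, c * r) \<in> ?G'" by blast
next
  fix y r s assume "(y, r) \<in> ?G'" "(y, s) \<in> ?G'"
  then obtain y1 r1 c1 y2 r2 c2
    where 1: "(y, r) = (y1 + c1 *\<^sub>R x, r1 + c1 * a)" "(y1, r1) \<in> G"
      and 2: "(y, s) = (y2 + c2 *\<^sub>R x, r2 + c2 * a)" "(y2, r2) \<in> G"
    by blast
  have diff: "(y1 - y2, r1 - r2) \<in> G"
    using dominated_linear_graph_add[OF G 1(2) dominated_linear_graph_scale[OF G 2(2), of "-1"]] by simp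
  have eq: "y1 - y2 = (c2 - c1) *\<^sub>R x" using 1 2 by (simp add: algebra_simps)
  show "r = s"
  proof (cases "c1 = c2")
    case True
    then show ?thesis using eq dominated_linear_graph_unique[OF G 1(2)] 2(2) 1 2 by auto
  next
    case False
    then have "(x, (r1 - r2) / (c2 - c1)) \<in> G"
      using dominated_linear_graph_scale[OF G diff, of "inverse (c2 - c1)"] eq
      by (simp add: divide_inverse mult.commute)
    then show ?thesis using x by blast
  qed
next
  fix y r assume "(y, r) \<in> ?G'"
  then show "r \<le> p y" using a by blast
qed

lemma dominated_linear_graph_extend:
  assumes sub: "\<And>x y. p (x + y) \<le> p x + p y"
    and hom: "\<And>c x. c > 0 \<Longrightarrow> p (c *\<^sub>R x) = c * p x"
    and G: "dominated_linear_graph p G" and x: "\<nexists>r. (x, r) \<in> G"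
  obtains G' where "dominated_linear_graph p G'" "G \<subset> G'"
proof -
  obtain a where "\<And>y r. (y, r) \<in> G \<Longrightarrow> r - p (y - x) \<le> a"
    and "\<And>z s. (z, s) \<in> G \<Longrightarrow> a \<le> p (z + x) - s"
    using dominated_linear_graph_value_bounds[OF sub G] by blast
  then have "\<And>y r c. (y, r) \<in> G \<Longrightarrow> r + c * a \<le> p (y + c *\<^sub>R x)"
    using dominated_linear_graph_extension_value[OF hom G] by blast
  then have "dominated_linear_graph p {(y + c *\<^sub>R x, r + c * a) | y r c. (y, r) \<in> G}"
    (is "dominated_linear_graph p ?G'")
    by (rule dominated_linear_graph_extend_by[OF G x])
  moreover have "G \<subseteq> ?G'" by force
  moreover have "(x, a) \<in> ?G'" using dominated_linear_graph_zero[OF G] by force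
  ultimately show ?thesis using that x by blast
qed

theorem sublinear_has_linear_minorant:
  fixes p :: "'a::real_vector \<Rightarrow> real"
  assumes sub: "\<And>x y. p (x + y) \<le> p x + p y"
    and hom: "\<And>c x. c > 0 \<Longrightarrow> p (c *\<^sub>R x) = c * p x"
  obtains \<phi> where "linear \<phi>" "\<And>x. \<phi> x \<le> p x"
proof -
  have "dominated_linear_graph p {(0, 0)}"
    unfolding dominated_linear_graph_def using hom[of 2 0] by auto
  then have "\<exists>G\<in>{G. dominated_linear_graph p G}. \<forall>X\<in>{G. dominated_linear_graph p G}. G \<subseteq> X \<longrightarrow> X = G"
    by (intro Zorn_Lemma2) (use dominated_linear_graph_Union_chain in \<open>fastforce\<close>)
  then obtain G where G: "dominated_linear_graph p G"
    and maximal: "\<And>X. dominated_linear_graph p X \<Longrightarrow> G \<subseteq> X \<Longrightarrow> X = G"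
    by blast
  have "\<exists>r. (x, r) \<in> G" for x
    using dominated_linear_graph_extend[OF sub hom G] maximal by blast
  then obtain \<phi> where \<phi>: "\<And>x. (x, \<phi> x) \<in> G" by metis
  note Gunique = dominated_linear_graph_unique[OF G]
  have "linear \<phi>"
  proof
    show "\<phi> (x + y) = \<phi> x + \<phi> y" for x y
      using Gunique[OF \<phi> dominated_linear_graph_add[OF G \<phi> \<phi>]] by simp
    show "\<phi> (c *\<^sub>R x) = c *\<^sub>R \<phi> x" for c x
      using Gunique[OF \<phi> dominated_linear_graph_scale[OF G \<phi>]] by simp
  qed
  then show ?thesis using that dominated_linear_graph_le[OF G \<phi>] by blast
qed

section \<open>A sandwich theorem\<close>

lemma convex_onD_comb:
  assumes "convex_on S f" "x \<in> S" "y \<in> S" "0 \<le> t" "t \<le> 1"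
  shows "t *\<^sub>R x + (1 - t) *\<^sub>R y \<in> S" "f (t *\<^sub>R x + (1 - t) *\<^sub>R y) \<le> t * f x + (1 - t) * f y"
  using assms unfolding convex_on_def convex_def by auto

lemma power2_norm_convex_comb_le:
  fixes u v :: "'a::real_normed_vector"
  assumes "0 \<le> t" "t \<le> 1"
  shows "(norm (t *\<^sub>R u + (1 - t) *\<^sub>R v))\<^sup>2 \<le> t * (norm u)\<^sup>2 + (1 - t) * (norm v)\<^sup>2"
proof -
  have "norm (t *\<^sub>R u + (1 - t) *\<^sub>R v) \<le> t * norm u + (1 - t) * norm v"
    using norm_triangle_ineq[of "t *\<^sub>R u" "(1 - t) *\<^sub>R v"] assms by simp
  then have "(norm (t *\<^sub>R u + (1 - t) *\<^sub>R v))\<^sup>2 \<le> (t * norm u + (1 - t) * norm v)\<^sup>2"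
    by (intro power_mono) auto
  also have "\<dots> = t * (norm u)\<^sup>2 + (1 - t) * (norm v)\<^sup>2 - t * (1 - t) * (norm u - norm v)\<^sup>2"
    by (simp add: power2_eq_square algebra_simps)
  also have "\<dots> \<le> t * (norm u)\<^sup>2 + (1 - t) * (norm v)\<^sup>2" using assms by simp
  finally show ?thesis .
qed

text \<open>The infimum of these values is \<open>inf\<^sub>t\<^sub>>\<^sub>0 h (t x) / t\<close>, where \<open>h\<close> is the infimal convolution of
  \<open>G\<close> (on \<open>D\<close>) with \<open>\<parallel>\<cdot>\<parallel>\<^sup>2 / 2\<close>; it is the sublinear function to which Hahn--Banach is applied.\<close>
definition sandwich_values :: "('a::real_normed_vector \<Rightarrow> real) \<Rightarrow> 'a set \<Rightarrow> 'a \<Rightarrow> real set" where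
  "sandwich_values G D x = {(G y + (norm (y - t *\<^sub>R x))\<^sup>2 / 2) / t | t y. 0 < t \<and> y \<in> D}"

lemma sandwich_valuesI: "0 < t \<Longrightarrow> y \<in> D \<Longrightarrow> (G y + (norm (y - t *\<^sub>R x))\<^sup>2 / 2) / t \<in> sandwich_values G D x"
  unfolding sandwich_values_def by blast

lemma sandwich_values_add:
  assumes G: "convex_on D G" and e1: "e1 \<in> sandwich_values G D x1" and e2: "e2 \<in> sandwich_values G D x2"
  shows "\<exists>e\<in>sandwich_values G D (x1 + x2). e \<le> e1 + e2"
proof -
  obtain t1 y1 where 1: "e1 = (G y1 + (norm (y1 - t1 *\<^sub>R x1))\<^sup>2 / 2) / t1" "0 < t1" "y1 \<in> D"
    using e1 unfolding sandwich_values_def by blast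
  obtain t2 y2 where 2: "e2 = (G y2 + (norm (y2 - t2 *\<^sub>R x2))\<^sup>2 / 2) / t2" "0 < t2" "y2 \<in> D"
    using e2 unfolding sandwich_values_def by blast
  define \<alpha> where "\<alpha> = t2 / (t1 + t2)"
  define t where "t = t1 * t2 / (t1 + t2)"
  have \<alpha>: "0 \<le> \<alpha>" "\<alpha> \<le> 1" using 1 2 by (auto simp: \<alpha>_def)
  have t: "0 < t" "\<alpha> / t = 1 / t1" "(1 - \<alpha>) / t = 1 / t2" using 1(2) 2(2)
    by (simp_all add: \<alpha>_def t_def field_simps add_pos_pos) (smt (verit) mult_pos_pos)+
  define y where "y = \<alpha> *\<^sub>R y1 + (1 - \<alpha>) *\<^sub>R y2"
  have yD: "y \<in> D" and Gy: "G y \<le> \<alpha> * G y1 + (1 - \<alpha>) * G y2"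
    using convex_onD_comb[OF G 1(3) 2(3) \<alpha>] by (simp_all add: y_def)
  have "\<alpha> * t1 = t" "(1 - \<alpha>) * t2 = t"
    using 1(2) 2(2) by (simp_all add: \<alpha>_def t_def field_simps add_pos_pos)
  moreover have "\<alpha> *\<^sub>R (y1 - t1 *\<^sub>R x1) + (1 - \<alpha>) *\<^sub>R (y2 - t2 *\<^sub>R x2)
      = y - (\<alpha> * t1) *\<^sub>R x1 - ((1 - \<alpha>) * t2) *\<^sub>R x2"
    by (simp add: y_def algebra_simps)
  ultimately have "y - t *\<^sub>R (x1 + x2) = \<alpha> *\<^sub>R (y1 - t1 *\<^sub>R x1) + (1 - \<alpha>) *\<^sub>R (y2 - t2 *\<^sub>R x2)"
    by (simp add: scaleR_right_distrib)
  then have N: "(norm (y - t *\<^sub>R (x1 + x2)))\<^sup>2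
      \<le> \<alpha> * (norm (y1 - t1 *\<^sub>R x1))\<^sup>2 + (1 - \<alpha>) * (norm (y2 - t2 *\<^sub>R x2))\<^sup>2"
    using power2_norm_convex_comb_le[OF \<alpha>] by simp
  have "(G y + (norm (y - t *\<^sub>R (x1 + x2)))\<^sup>2 / 2) / t
      \<le> (\<alpha> * (G y1 + (norm (y1 - t1 *\<^sub>R x1))\<^sup>2 / 2)
          + (1 - \<alpha>) * (G y2 + (norm (y2 - t2 *\<^sub>R x2))\<^sup>2 / 2)) / t"
    using Gy N t(1) by (intro divide_right_mono) (auto simp: algebra_simps diff_divide_distrib)
  also have "\<dots> = \<alpha> / t * (G y1 + (norm (y1 - t1 *\<^sub>R x1))\<^sup>2 / 2)
      + (1 - \<alpha>) / t * (G y2 + (norm (y2 - t2 *\<^sub>R x2))\<^sup>2 / 2)"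
    by (simp add: add_divide_distrib)
  also have "\<dots> = e1 + e2"
    unfolding t(2,3) 1(1) 2(1) by simp
  finally show ?thesis using sandwich_valuesI[OF t(1) yD] by blast
qed

lemma sandwich_values_scale:
  assumes "e \<in> sandwich_values G D x" "0 < c"
  shows "c * e \<in> sandwich_values G D (c *\<^sub>R x)"
proof -
  obtain t y where ty: "e = (G y + (norm (y - t *\<^sub>R x))\<^sup>2 / 2) / t" "0 < t" "y \<in> D"
    using assms(1) unfolding sandwich_values_def by blast
  then have "c * e = (G y + (norm (y - (t / c) *\<^sub>R (c *\<^sub>R x)))\<^sup>2 / 2) / (t / c)"
    using assms(2) by simp
  moreover have "\<dots> \<in> sandwich_values G D (c *\<^sub>R x)"
    using ty assms(2) by (intro sandwich_valuesI) auto
  ultimately show ?thesis by simp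
qed

lemma sandwich_values_zero_nonneg:
  assumes "\<And>u. u \<in> D \<Longrightarrow> 0 \<le> G u + (norm u)\<^sup>2 / 2" "e \<in> sandwich_values G D 0"
  shows "0 \<le> e"
  using assms unfolding sandwich_values_def by auto

definition sandwich_gauge :: "('a::real_normed_vector \<Rightarrow> real) \<Rightarrow> 'a set \<Rightarrow> 'a \<Rightarrow> real" where
  "sandwich_gauge G D x = Inf (sandwich_values G D x)"

context
  fixes G :: "'a::real_normed_vector \<Rightarrow> real" and D :: "'a set"
  assumes G_convex: "convex_on D G"
    and D_nonempty: "D \<noteq> {}"
    and G_lower: "\<And>u. u \<in> D \<Longrightarrow> 0 \<le> G u + (norm u)\<^sup>2 / 2"
begin

lemma sandwich_values_nonempty: "sandwich_values G D x \<noteq> {}"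
proof -
  obtain y where "y \<in> D" using D_nonempty by blast
  from sandwich_valuesI[OF zero_less_one this] show ?thesis by blast
qed

lemma bdd_below_sandwich_values: "bdd_below (sandwich_values G D x)"
proof -
  obtain e' where e': "e' \<in> sandwich_values G D (- x)" using sandwich_values_nonempty by blast
  have "- e' \<le> e" if "e \<in> sandwich_values G D x" for e
    using sandwich_values_add[OF G_convex that e'] sandwich_values_zero_nonneg[OF G_lower] by force
  then show ?thesis unfolding bdd_below_def by blast
qed

lemma sandwich_gauge_le: "e \<in> sandwich_values G D x \<Longrightarrow> sandwich_gauge G D x \<le> e"
  unfolding sandwich_gauge_def by (rule cInf_lower[OF _ bdd_below_sandwich_values])

lemma sandwich_gauge_greatest: "(\<And>e. e \<in> sandwich_values G D x \<Longrightarrow> c \<le> e) \<Longrightarrow> c \<le> sandwich_gauge G D x"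
  unfolding sandwich_gauge_def using sandwich_values_nonempty by (rule cInf_greatest)

lemma sandwich_gauge_add: "sandwich_gauge G D (x + y) \<le> sandwich_gauge G D x + sandwich_gauge G D y"
proof -
  have "sandwich_gauge G D (x + y) - e2 \<le> sandwich_gauge G D x"
    if e2: "e2 \<in> sandwich_values G D y" for e2
  proof (rule sandwich_gauge_greatest)
    fix e1 assume "e1 \<in> sandwich_values G D x"
    then show "sandwich_gauge G D (x + y) - e2 \<le> e1"
      using sandwich_values_add[OF G_convex _ e2] sandwich_gauge_le by force
  qed
  then have "sandwich_gauge G D (x + y) - sandwich_gauge G D x \<le> sandwich_gauge G D y"
    by (intro sandwich_gauge_greatest) force
  then show ?thesis by simp
qed

lemma sandwich_gauge_scale:
  assumes "0 < c"
  shows "sandwich_gauge G D (c *\<^sub>R x) = c * sandwich_gauge G D x"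
proof (rule antisym)
  have "sandwich_gauge G D (c *\<^sub>R x) / c \<le> sandwich_gauge G D x"
  proof (rule sandwich_gauge_greatest)
    fix e assume "e \<in> sandwich_values G D x"
    then have "sandwich_gauge G D (c *\<^sub>R x) \<le> c * e"
      using sandwich_values_scale assms sandwich_gauge_le by blast
    then show "sandwich_gauge G D (c *\<^sub>R x) / c \<le> e" using assms by (simp add: field_simps)
  qed
  then show "sandwich_gauge G D (c *\<^sub>R x) \<le> c * sandwich_gauge G D x"
    using assms by (simp add: field_simps)
next
  have "c * sandwich_gauge G D x \<le> e" if "e \<in> sandwich_values G D (c *\<^sub>R x)" for e
  proof -
    have "inverse c * e \<in> sandwich_values G D x"
      using sandwich_values_scale[OF that, of "inverse c"] assms by simp
    then have "sandwich_gauge G D x \<le> inverse c * e" by (rule sandwich_gauge_le)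
    then show ?thesis using assms by (simp add: field_simps)
  qed
  then show "c * sandwich_gauge G D x \<le> sandwich_gauge G D (c *\<^sub>R x)"
    by (rule sandwich_gauge_greatest)
qed

lemma sandwich_gauge_diff_le: "u \<in> D \<Longrightarrow> sandwich_gauge G D (u - w) \<le> G u + (norm w)\<^sup>2 / 2"
  using sandwich_gauge_le[OF sandwich_valuesI[of 1 u D G "u - w"]] by simp

text \<open>Boundedness of the linear minorant comes from testing the separation on the unit sphere.\<close>
theorem sandwich_bounded_linear:
  obtains \<phi> where "bounded_linear \<phi>" "\<And>u w. u \<in> D \<Longrightarrow> \<phi> u - \<phi> w \<le> G u + (norm w)\<^sup>2 / 2"
proof -
  obtain \<phi> where lin: "linear \<phi>" and \<phi>_le: "\<And>x. \<phi> x \<le> sandwich_gauge G D x"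
    using sublinear_has_linear_minorant[of "sandwich_gauge G D"] sandwich_gauge_add sandwich_gauge_scale
    by blast
  have sep: "\<phi> u - \<phi> w \<le> G u + (norm w)\<^sup>2 / 2" if "u \<in> D" for u w
    using order_trans[OF \<phi>_le sandwich_gauge_diff_le[OF that]] linear_diff[OF lin] by metis
  obtain y0 where y0: "y0 \<in> D" using D_nonempty by blast
  define K where "K = G y0 - \<phi> y0 + 1/2"
  have "norm (\<phi> x) \<le> norm x * K" for x
  proof (cases "x = 0")
    case True
    then show ?thesis using linear_0[OF lin] by simp
  next
    case False
    have "\<phi> (x /\<^sub>R norm x) \<le> K" "- \<phi> (x /\<^sub>R norm x) \<le> K"
      using sep[OF y0, of "- (x /\<^sub>R norm x)"] sep[OF y0, of "x /\<^sub>R norm x"] False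
      by (simp_all add: K_def linear_neg[OF lin])
    then have "\<bar>\<phi> x / norm x\<bar> \<le> K"
      by (simp add: linear_scale[OF lin] divide_inverse mult.commute abs_le_iff)
    then show ?thesis using False by (simp add: divide_le_eq mult.commute)
  qed
  then have "bounded_linear \<phi>"
    using lin by (intro bounded_linear_intro[where K = K]) (auto simp: linear_add linear_scale)
  then show ?thesis using that sep by blast
qed

end

section \<open>Convex hull of a function and a point\<close>

lemma cInf_le_convex_comb:
  fixes A B C :: "real set"
  assumes "A \<noteq> {}" "B \<noteq> {}" "bdd_below C" "0 < l" "l < 1"
    and comb: "\<And>a b. a \<in> A \<Longrightarrow> b \<in> B \<Longrightarrow> \<exists>c\<in>C. c \<le> l * a + (1 - l) * b"
  shows "Inf C \<le> l * Inf A + (1 - l) * Inf B"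
proof -
  have "Inf C \<le> l * a + (1 - l) * b" if "a \<in> A" "b \<in> B" for a b
    using comb[OF that] cInf_lower[OF _ assms(3)] by force
  then have "(Inf C - (1 - l) * b) / l \<le> Inf A" if "b \<in> B" for b
    using that assms(4) by (intro cInf_greatest[OF assms(1)]) (simp add: pos_divide_le_eq algebra_simps)
  then have "(Inf C - l * Inf A) / (1 - l) \<le> Inf B"
    using assms(4,5) by (intro cInf_greatest[OF assms(2)]) (simp add: pos_divide_le_eq algebra_simps)
  then show ?thesis using assms(5) by (simp add: pos_divide_le_eq algebra_simps)
qed

text \<open>The convex hull of \<open>F\<close> (restricted to \<open>D\<close>) and of the single value \<open>c\<close> at \<open>z\<close>:
  the greatest convex function below \<open>F\<close> on \<open>D\<close> and below \<open>c\<close> at \<open>z\<close>.\<close>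
definition convex_join_values :: "('a::real_vector \<Rightarrow> real) \<Rightarrow> 'a set \<Rightarrow> 'a \<Rightarrow> real \<Rightarrow> 'a \<Rightarrow> real set" where
  "convex_join_values F D z c x =
     {t * F y + (1 - t) * c | t y. 0 \<le> t \<and> t \<le> 1 \<and> y \<in> D \<and> x = t *\<^sub>R y + (1 - t) *\<^sub>R z}"

definition convex_join :: "('a::real_vector \<Rightarrow> real) \<Rightarrow> 'a set \<Rightarrow> 'a \<Rightarrow> real \<Rightarrow> 'a \<Rightarrow> ereal" where
  "convex_join F D z c x =
     (if convex_join_values F D z c x = {} then \<infinity> else ereal (Inf (convex_join_values F D z c x)))"

lemma convex_join_valuesI:
  "0 \<le> t \<Longrightarrow> t \<le> 1 \<Longrightarrow> y \<in> D \<Longrightarrow> t * F y + (1 - t) * c \<in> convex_join_values F D z c (t *\<^sub>R y + (1 - t) *\<^sub>R z)"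
  unfolding convex_join_values_def by blast

lemma convex_join_values_comb:
  assumes F: "convex_on D F" and "0 < l" "l < 1"
    and r1: "r1 \<in> convex_join_values F D z c x1" and r2: "r2 \<in> convex_join_values F D z c x2"
  shows "\<exists>r\<in>convex_join_values F D z c (l *\<^sub>R x1 + (1 - l) *\<^sub>R x2). r \<le> l * r1 + (1 - l) * r2"
proof -
  obtain t1 y1 where 1: "r1 = t1 * F y1 + (1 - t1) * c" "0 \<le> t1" "t1 \<le> 1" "y1 \<in> D"
      "x1 = t1 *\<^sub>R y1 + (1 - t1) *\<^sub>R z"
    using r1 unfolding convex_join_values_def by blast
  obtain t2 y2 where 2: "r2 = t2 * F y2 + (1 - t2) * c" "0 \<le> t2" "t2 \<le> 1" "y2 \<in> D"
      "x2 = t2 *\<^sub>R y2 + (1 - t2) *\<^sub>R z"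
    using r2 unfolding convex_join_values_def by blast
  define T where "T = l * t1 + (1 - l) * t2"
  define \<mu> where "\<mu> = l * t1 / T" \<comment> \<open>if \<open>T = 0\<close> then \<open>x1 = x2 = z\<close>, and \<open>\<mu> = 0\<close> is harmless\<close>
  have lt: "0 \<le> l * t1" "0 \<le> (1 - l) * t2" using 1 2 assms(2,3) by simp_all
  then have T: "0 \<le> T" "T \<le> 1" unfolding T_def using 1 2 assms(2,3)
    by (simp_all add: convex_bound_le)
  have T0: "T = 0 \<Longrightarrow> l * t1 = 0 \<and> (1 - l) * t2 = 0" using lt unfolding T_def by linarith
  have \<mu>1: "T * \<mu> = l * t1"
    using T0 by (cases "T = 0") (simp_all add: \<mu>_def)
  have \<mu>2: "T * (1 - \<mu>) = (1 - l) * t2"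
    using T0 by (cases "T = 0") (simp_all add: \<mu>_def T_def field_simps)
  have \<mu>01: "0 \<le> \<mu>" "\<mu> \<le> 1"
    unfolding \<mu>_def using lt T by (auto simp: divide_le_eq_1 T_def)
  define y where "y = \<mu> *\<^sub>R y1 + (1 - \<mu>) *\<^sub>R y2"
  have "T *\<^sub>R y = (l * t1) *\<^sub>R y1 + ((1 - l) * t2) *\<^sub>R y2"
    unfolding y_def scaleR_add_right scaleR_scaleR \<mu>1 \<mu>2 ..
  then have x: "l *\<^sub>R x1 + (1 - l) *\<^sub>R x2 = T *\<^sub>R y + (1 - T) *\<^sub>R z"
    unfolding 1(5) 2(5) T_def by (simp add: algebra_simps)
  have "T * F y \<le> T * (\<mu> * F y1 + (1 - \<mu>) * F y2)"
    using convex_onD_comb(2)[OF F 1(4) 2(4) \<mu>01] T by (simp add: y_def mult_left_mono)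
  also have "\<dots> = (l * t1) * F y1 + ((1 - l) * t2) * F y2"
    unfolding \<mu>1[symmetric] \<mu>2[symmetric] by (simp add: algebra_simps)
  finally have "T * F y + (1 - T) * c \<le> l * r1 + (1 - l) * r2"
    unfolding 1(1) 2(1) by (simp add: T_def algebra_simps)
  moreover have "T * F y + (1 - T) * c \<in> convex_join_values F D z c (l *\<^sub>R x1 + (1 - l) *\<^sub>R x2)"
    unfolding x using T convex_onD_comb(1)[OF F 1(4) 2(4) \<mu>01]
    by (intro convex_join_valuesI) (simp_all add: y_def)
  ultimately show ?thesis by blast
qed

lemma convex_join_le:
  assumes "r \<in> convex_join_values F D z c x" "bdd_below (convex_join_values F D z c x)"
  shows "convex_join F D z c x \<le> ereal r"
  using assms cInf_lower[OF assms] by (auto simp: convex_join_def)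

lemma ereal_le_convex_join:
  assumes "\<And>r. r \<in> convex_join_values F D z c x \<Longrightarrow> a \<le> r"
  shows "ereal a \<le> convex_join F D z c x"
  using assms by (auto simp: convex_join_def intro: cInf_greatest)

lemma convex_ext_convex_join:
  assumes F: "convex_on D F" and bdd: "\<And>x. bdd_below (convex_join_values F D z c x)"
  shows "convex_ext (convex_join F D z c)"
  unfolding convex_ext_def
proof (intro conjI allI impI)
  show "convex_join F D z c x \<noteq> -\<infinity>" for x
    by (simp add: convex_join_def)
next
  fix x1 x2 and l :: real
  assume l: "0 < l \<and> l < 1"
  let ?R = "convex_join_values F D z c" and ?g = "convex_join F D z c"
  show "?g (l *\<^sub>R x1 + (1 - l) *\<^sub>R x2) \<le> ereal l * ?g x1 + ereal (1 - l) * ?g x2"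
  proof (cases "?R x1 = {} \<or> ?R x2 = {}")
    case True
    then have "ereal l * ?g x1 + ereal (1 - l) * ?g x2 = \<infinity>"
      using l by (auto simp: convex_join_def)
    then show ?thesis by (simp only: ereal_less_eq(1))
  next
    case False
    then obtain r1 r2 where "r1 \<in> ?R x1" "r2 \<in> ?R x2" by blast
    then have "?R (l *\<^sub>R x1 + (1 - l) *\<^sub>R x2) \<noteq> {}"
      using convex_join_values_comb[OF F] l by blast
    moreover have "Inf (?R (l *\<^sub>R x1 + (1 - l) *\<^sub>R x2)) \<le> l * Inf (?R x1) + (1 - l) * Inf (?R x2)"
      using False l convex_join_values_comb[OF F] by (intro cInf_le_convex_comb bdd) auto
    ultimately show ?thesis using False by (simp add: convex_join_def)
  qed
qed

section \<open>Convex majorants of a quadratic form\<close>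

lemma le_if_forall_add_mult_le:
  fixes K d F :: real
  assumes "\<And>t. 0 < t \<Longrightarrow> t < 1 \<Longrightarrow> K + t * d \<le> F"
  shows "K \<le> F"
proof (rule tendsto_upperbound)
  show "((\<lambda>t. K + t * d) \<longlongrightarrow> K) (at_right 0)"
    by (auto intro!: tendsto_eq_intros)
  show "\<forall>\<^sub>F t in at_right 0. K + t * d \<le> F"
    using assms by (auto simp: eventually_at_right_field intro!: exI[of _ 1])
qed simp

locale sym_bilinear_form =
  fixes bf :: "'a::real_vector \<Rightarrow> 'a \<Rightarrow> real"
  assumes bilinear: "bilinear bf" and sym: "bf x y = bf y x"
begin

lemmas bf_simps = bilinear_ladd[OF bilinear] bilinear_radd[OF bilinear]
  bilinear_lmul[OF bilinear] bilinear_rmul[OF bilinear]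
  bilinear_lsub[OF bilinear] bilinear_rsub[OF bilinear]
  bilinear_lneg[OF bilinear] bilinear_rneg[OF bilinear]
  bilinear_lzero[OF bilinear] bilinear_rzero[OF bilinear]

lemma qf_add: "qf bf (x + y) = qf bf x + bf x y + qf bf y"
  using sym[of y x] by (simp add: qf_def bf_simps algebra_simps)

lemma qf_diff: "qf bf (x - y) = qf bf x - bf x y + qf bf y"
  using sym[of y x] by (simp add: qf_def bf_simps algebra_simps add_divide_distrib diff_divide_distrib)

lemma qf_uminus: "qf bf (- x) = qf bf x"
  by (simp add: qf_def bf_simps)

lemma qf_convex_comb:
  "qf bf (t *\<^sub>R x + (1 - t) *\<^sub>R y) = t * qf bf x + (1 - t) * qf bf y - t * (1 - t) * qf bf (x - y)"
  using sym[of y x] by (simp add: qf_def bf_simps algebra_simps add_divide_distrib diff_divide_distrib)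

lemma convex_ext_Phi:
  assumes "A \<noteq> {}"
  shows "convex_ext (Phi bf A)"
  unfolding convex_ext_def
proof (intro conjI allI impI)
  show "Phi bf A x \<noteq> -\<infinity>" for x
    using assms by (auto simp: Phi_def SUP_eq_iff)
next
  fix x y :: 'a and t :: real
  assume t: "0 < t \<and> t < 1"
  show "Phi bf A (t *\<^sub>R x + (1 - t) *\<^sub>R y) \<le> ereal t * Phi bf A x + ereal (1 - t) * Phi bf A y"
    unfolding Phi_def
  proof (rule SUP_least)
    fix a assume "a \<in> A"
    have "ereal (bf (t *\<^sub>R x + (1 - t) *\<^sub>R y) a - qf bf a)
        = ereal t * ereal (bf x a - qf bf a) + ereal (1 - t) * ereal (bf y a - qf bf a)"
      by (simp add: bf_simps algebra_simps)
    also have "\<dots> \<le> ereal t * (SUP a\<in>A. ereal (bf x a - qf bf a))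
        + ereal (1 - t) * (SUP a\<in>A. ereal (bf y a - qf bf a))"
      using t \<open>a \<in> A\<close> by (intro add_mono ereal_mult_left_mono SUP_upper) auto
    finally show "ereal (bf (t *\<^sub>R x + (1 - t) *\<^sub>R y) a - qf bf a) \<le> \<dots>" .
  qed
qed

lemma Phi_le_qf_if_q_positive:
  assumes "q_positive bf (insert c A)"
  shows "Phi bf A c \<le> ereal (qf bf c)"
  unfolding Phi_def
proof (rule SUP_least)
  fix a assume "a \<in> A"
  then have "0 \<le> qf bf (c - a)" using assms unfolding q_positive_def by blast
  then show "ereal (bf c a - qf bf a) \<le> ereal (qf bf c)" by (simp add: qf_diff)
qed

end

locale convex_q_majorant = sym_bilinear_form +
  fixes f :: "'a::real_vector \<Rightarrow> ereal"
  assumes majorant: "f \<in> convex_majorants bf"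
begin

definition eff_dom :: "'a set" where
  "eff_dom = {x. f x \<noteq> \<infinity>}"

definition f_real :: "'a \<Rightarrow> real" where
  "f_real x = real_of_ereal (f x)"

definition coincidence_set :: "'a set" where
  "coincidence_set = {a. f a = ereal (qf bf a)}"

lemma qf_le: "ereal (qf bf x) \<le> f x"
  using majorant unfolding convex_majorants_def by blast

lemma convex_comb_le: "0 < t \<Longrightarrow> t < 1 \<Longrightarrow> f (t *\<^sub>R x + (1 - t) *\<^sub>R y) \<le> ereal t * f x + ereal (1 - t) * f y"
  using majorant unfolding convex_majorants_def convex_ext_def by blast

lemma f_eq_f_real: "x \<in> eff_dom \<Longrightarrow> f x = ereal (f_real x)"
  using majorant unfolding convex_majorants_def convex_ext_def eff_dom_def f_real_def
  by (cases "f x") auto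

lemma qf_le_f_real: "x \<in> eff_dom \<Longrightarrow> qf bf x \<le> f_real x"
  using qf_le[of x] f_eq_f_real[of x] by simp

lemma f_real_convex_comb:
  assumes "x \<in> eff_dom" "y \<in> eff_dom" "0 \<le> t" "t \<le> 1"
  shows "t *\<^sub>R x + (1 - t) *\<^sub>R y \<in> eff_dom
    \<and> f_real (t *\<^sub>R x + (1 - t) *\<^sub>R y) \<le> t * f_real x + (1 - t) * f_real y"
proof (cases "t = 0 \<or> t = 1")
  case True
  then show ?thesis using assms by auto
next
  case False
  then have "f (t *\<^sub>R x + (1 - t) *\<^sub>R y) \<le> ereal (t * f_real x + (1 - t) * f_real y)"
    using convex_comb_le[of t x y] assms by (simp add: f_eq_f_real)
  moreover have "f (t *\<^sub>R x + (1 - t) *\<^sub>R y) \<noteq> -\<infinity>"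
    using majorant unfolding convex_majorants_def convex_ext_def by blast
  ultimately show ?thesis by (cases "f (t *\<^sub>R x + (1 - t) *\<^sub>R y)") (auto simp: eff_dom_def f_real_def)
qed

lemma convex_on_f_real: "convex_on eff_dom f_real"
proof (rule convex_onI)
  show "convex eff_dom"
    unfolding convex_alt
  proof (intro ballI allI impI)
    fix x y and u :: real
    assume "x \<in> eff_dom" "y \<in> eff_dom" "0 \<le> u \<and> u \<le> 1"
    then show "(1 - u) *\<^sub>R x + u *\<^sub>R y \<in> eff_dom" using f_real_convex_comb[of x y "1 - u"] by simp
  qed
  show "f_real ((1 - t) *\<^sub>R x + t *\<^sub>R y) \<le> (1 - t) * f_real x + t * f_real y"
    if "0 < t" "t < 1" "x \<in> eff_dom" "y \<in> eff_dom" for t x y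
    using that f_real_convex_comb[of x y "1 - t"] by simp
qed

lemma coincidence_set_qf_diff_nonneg:
  assumes "a \<in> coincidence_set" "b \<in> coincidence_set"
  shows "0 \<le> qf bf (a - b)"
proof -
  have "ereal (qf bf ((1/2) *\<^sub>R a + (1 - 1/2) *\<^sub>R b)) \<le> ereal (1/2) * f a + ereal (1 - 1/2) * f b"
    using order_trans[OF qf_le convex_comb_le[of "1/2" a b]] by simp
  then show ?thesis using assms qf_convex_comb[of "1/2" a b] by (simp add: coincidence_set_def)
qed

text \<open>Convexity of \<open>f\<close> between \<open>a\<close> and \<open>y\<close>, with \<open>f \<ge> q\<close> on the segment, bounds the one-sided
  derivative of \<open>f\<close> at \<open>a\<close>, which equals that of \<open>q\<close>.\<close>
lemma bf_minus_qf_le: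
  assumes "a \<in> coincidence_set"
  shows "ereal (bf y a - qf bf a) \<le> f y"
proof (cases "y \<in> eff_dom")
  case True
  have "qf bf y - qf bf (y - a) + t * qf bf (y - a) \<le> f_real y" if t: "0 < t" "t < 1" for t
  proof -
    have "ereal (qf bf (t *\<^sub>R y + (1 - t) *\<^sub>R a)) \<le> ereal (t * f_real y + (1 - t) * qf bf a)"
      using order_trans[OF qf_le convex_comb_le[OF t, of y a]] assms True
      by (simp add: coincidence_set_def f_eq_f_real)
    then have "t * qf bf y + (1 - t) * qf bf a - t * (1 - t) * qf bf (y - a)
        \<le> t * f_real y + (1 - t) * qf bf a"
      unfolding qf_convex_comb by simp
    then have "t * (qf bf y - (1 - t) * qf bf (y - a)) \<le> t * f_real y"
      by (simp add: algebra_simps)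
    then have "qf bf y - (1 - t) * qf bf (y - a) \<le> f_real y" using t by simp
    then show ?thesis by (simp add: algebra_simps)
  qed
  then have "qf bf y - qf bf (y - a) \<le> f_real y" by (rule le_if_forall_add_mult_le)
  then show ?thesis using True by (simp add: f_eq_f_real qf_diff)
qed (simp add: eff_dom_def)

lemma Phi_coincidence_set_le: "Phi bf coincidence_set x \<le> f x"
  unfolding Phi_def using bf_minus_qf_le by (rule SUP_least)

end

lemma (in convex_q_majorant) qf_le_convex_join_values:
  assumes z: "\<And>y. y \<in> eff_dom \<Longrightarrow> bf y z - qf bf z \<le> f_real y"
    and r: "r \<in> convex_join_values f_real eff_dom z (qf bf z) x"
  shows "qf bf x \<le> r"
proof -
  obtain t y where ty: "r = t * f_real y + (1 - t) * qf bf z" "0 \<le> t" "t \<le> 1" "y \<in> eff_dom"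
      "x = t *\<^sub>R y + (1 - t) *\<^sub>R z"
    using r unfolding convex_join_values_def by blast
  have "r - qf bf x = t * (1 - t) * (f_real y - bf y z + qf bf z) + t\<^sup>2 * (f_real y - qf bf y)"
    unfolding ty(1,5) qf_convex_comb qf_diff by (simp add: algebra_simps power2_eq_square)
  moreover have "0 \<le> t * (1 - t) * (f_real y - bf y z + qf bf z) + t\<^sup>2 * (f_real y - qf bf y)"
    using ty(2,3) z[OF ty(4)] qf_le_f_real[OF ty(4)] by simp
  ultimately show ?thesis by simp
qed

locale minimal_convex_q_majorant = convex_q_majorant +
  assumes minimal: "\<forall>g\<in>convex_majorants bf. (\<forall>x. g x \<le> f x) \<longrightarrow> g = f"
begin

text \<open>The convex hull of \<open>f\<close> and the value \<open>q z\<close> at \<open>z\<close> is still a convex majorant of \<open>q\<close>.\<close>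
lemma in_coincidence_set_if_bf_minus_qf_le:
  assumes "y0 \<in> eff_dom" and z: "\<And>y. y \<in> eff_dom \<Longrightarrow> bf y z - qf bf z \<le> f_real y"
  shows "z \<in> coincidence_set"
proof -
  let ?R = "convex_join_values f_real eff_dom z (qf bf z)"
    and ?g = "convex_join f_real eff_dom z (qf bf z)"
  have bdd: "bdd_below (?R x)" for x
    using qf_le_convex_join_values[OF z] unfolding bdd_below_def by blast
  have "?g \<in> convex_majorants bf"
    unfolding convex_majorants_def
    using convex_ext_convex_join[OF convex_on_f_real bdd] qf_le_convex_join_values[OF z]
    by (blast intro: ereal_le_convex_join)
  moreover have "?g x \<le> f x" for x
  proof (cases "x \<in> eff_dom")
    case True
    then have "f_real x \<in> ?R x" using convex_join_valuesI[of 1 x eff_dom f_real "qf bf z" z] by simp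
    then show ?thesis using convex_join_le[OF _ bdd] True by (simp add: f_eq_f_real)
  qed (simp add: eff_dom_def)
  ultimately have "?g = f" using minimal by blast
  moreover have "qf bf z \<in> ?R z"
    using convex_join_valuesI[of 0 y0 eff_dom f_real "qf bf z" z] assms(1) by simp
  ultimately have "f z \<le> ereal (qf bf z)" using convex_join_le[OF _ bdd] by metis
  then show ?thesis using qf_le[of z] by (simp add: coincidence_set_def)
qed

end

section \<open>SSDB spaces\<close>

locale SSDB_space = sym_bilinear_form bf for bf :: "'a::banach \<Rightarrow> 'a \<Rightarrow> real" +
  assumes bounded_linear_bf: "bounded_linear (\<lambda>x. bf x b)"
    and onorm_bf: "onorm (\<lambda>x. bf x b) = norm b"
    and bf_surj: "bounded_linear \<phi> \<Longrightarrow> \<exists>b. \<phi> = (\<lambda>x. bf x b)"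
begin

lemma abs_bf_le: "\<bar>bf x b\<bar> \<le> norm x * norm b"
  using onorm[OF bounded_linear_bf, of x b] onorm_bf[of b] by (simp add: mult.commute)

lemma abs_qf_le: "\<bar>qf bf x\<bar> \<le> (norm x)\<^sup>2 / 2"
  using abs_bf_le[of x x] by (simp add: qf_def power2_eq_square)

lemma exists_abs_bf_gt:
  assumes "0 \<le> s" "s < norm b"
  obtains x where "s * norm x < \<bar>bf x b\<bar>"
proof (rule ccontr)
  assume "\<not> thesis"
  then have "norm (bf x b) \<le> s * norm x" for x using that by (metis not_less real_norm_def)
  then have "onorm (\<lambda>x. bf x b) \<le> s" using assms(1) by (intro onorm_bound) auto
  then show False using onorm_bf[of b] assms(2) by simp
qed

lemma power2_le_if_bf_bound:
  assumes bound: "\<And>w. - bf w b \<le> C + (norm w)\<^sup>2 / 2" and s: "0 \<le> s" "s < norm b"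
  shows "s\<^sup>2 \<le> 2 * C"
proof -
  obtain x where x: "s * norm x < \<bar>bf x b\<bar>" using exists_abs_bf_gt[OF s] by blast
  define n where "n = norm x"
  have "x \<noteq> 0" using x by (auto simp: bf_simps)
  then have n: "0 < n" by (simp add: n_def)
  obtain w where w: "norm w = s" "- bf w b = s / n * \<bar>bf x b\<bar>"
  proof (cases "0 \<le> bf x b")
    case True
    show ?thesis
      by (rule that[of "- (s / n) *\<^sub>R x"]) (use True n s in \<open>auto simp: bf_simps n_def[symmetric]\<close>)
  next
    case False
    show ?thesis
      by (rule that[of "(s / n) *\<^sub>R x"]) (use False n s in \<open>auto simp: bf_simps n_def[symmetric]\<close>)
  qed
  have "s\<^sup>2 = s / n * (s * n)" using n by (simp add: power2_eq_square)
  also have "\<dots> \<le> s / n * \<bar>bf x b\<bar>" using x s n by (intro mult_left_mono) (auto simp: n_def)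
  also have "\<dots> \<le> C + s\<^sup>2 / 2" using bound[of w] unfolding w .
  finally show ?thesis by simp
qed

text \<open>The isometry \<open>B \<rightarrow> B\<^sup>*\<close> makes \<open>\<parallel>\<cdot>\<parallel>\<^sup>2 / 2\<close> self-conjugate:
  \<open>sup\<^sub>w (- bf w b - \<parallel>w\<parallel>\<^sup>2 / 2) = \<parallel>b\<parallel>\<^sup>2 / 2\<close>.\<close>
lemma half_power2_norm_le:
  assumes bound: "\<And>w. - bf w b \<le> C + (norm w)\<^sup>2 / 2"
  shows "(norm b)\<^sup>2 / 2 \<le> C"
proof -
  have C: "0 \<le> C" using bound[of 0] by (simp add: bf_simps)
  have "norm b \<le> sqrt (2 * C)"
  proof (rule dense_le)
    fix s assume s: "s < norm b"
    show "s \<le> sqrt (2 * C)"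
    proof (cases "0 \<le> s")
      case True
      show ?thesis using power2_le_if_bf_bound[OF bound True s] by (rule real_le_rsqrt)
    next
      case False
      moreover have "0 \<le> sqrt (2 * C)" using C by simp
      ultimately show ?thesis by linarith
    qed
  qed
  then have "(norm b)\<^sup>2 \<le> (sqrt (2 * C))\<^sup>2" by (intro power_mono) auto
  then show ?thesis using C by simp
qed

end

lemma SSDB_space_if_SSDB:
  assumes "SSDB bf"
  shows "SSDB_space bf"
proof -
  have "bilinear bf" "\<And>x y. bf x y = bf y x" "\<And>b. bounded_linear (\<lambda>x. bf x b)"
    "\<And>b. onorm (\<lambda>x. bf x b) = norm b" "\<And>\<phi>. bounded_linear \<phi> \<Longrightarrow> \<exists>b. \<phi> = (\<lambda>x. bf x b)"
    using assms unfolding SSDB_def SSD_def by metis+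
  then show ?thesis by (intro SSDB_space.intro SSDB_space_axioms.intro sym_bilinear_form.intro)
qed

locale SSDB_minimal_majorant = SSDB_space bf + minimal_convex_q_majorant bf f
  for bf :: "'a::banach \<Rightarrow> 'a \<Rightarrow> real" and f
begin

text \<open>Otherwise \<open>f \<equiv> \<infinity>\<close> would lie strictly above the convex majorant \<open>\<parallel>\<cdot>\<parallel>\<^sup>2 / 2\<close> of \<open>q\<close>.\<close>
lemma eff_dom_nonempty: "eff_dom \<noteq> {}"
proof
  assume empty: "eff_dom = {}"
  define j where "j x = ereal ((norm x)\<^sup>2 / 2)" for x :: 'a
  have "convex_ext j"
    unfolding convex_ext_def
  proof (intro conjI allI impI)
    fix x y :: 'a and t :: real
    assume "0 < t \<and> t < 1"
    then show "j (t *\<^sub>R x + (1 - t) *\<^sub>R y) \<le> ereal t * j x + ereal (1 - t) * j y"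
      using power2_norm_convex_comb_le[of t x y] by (simp add: j_def add_divide_distrib)
  qed (simp add: j_def)
  moreover have "ereal (qf bf x) \<le> j x" for x
    using abs_qf_le[of x] by (simp add: j_def)
  ultimately have "j \<in> convex_majorants bf" unfolding convex_majorants_def by blast
  moreover have "j x \<le> f x" for x using empty by (auto simp: eff_dom_def)
  ultimately have "j = f" using minimal by blast
  then have "j 0 = \<infinity>" using empty by (auto simp: eff_dom_def)
  then show False by (simp add: j_def)
qed

text \<open>The sandwich theorem applied to \<open>f\<close> shifted by \<open>x0\<close>; the separating functional is \<open>bf \<cdot> b\<close>
  by surjectivity of \<open>B \<rightarrow> B\<^sup>*\<close>.\<close>
lemma exists_affine_minorant:
  obtains b where "\<And>y. y \<in> eff_dom \<Longrightarrow>
    bf y (x0 + b) - qf bf (x0 + b) + qf bf b + (norm b)\<^sup>2 / 2 \<le> f_real y"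
proof -
  define D where "D = {u. u + x0 \<in> eff_dom}"
  define G where "G u = f_real (u + x0) - bf u x0 - qf bf x0" for u
  have "convex_on D G"
  proof (rule convex_onI)
    show "convex D"
      unfolding convex_alt
    proof (intro ballI allI impI)
      fix u v and t :: real assume "u \<in> D" "v \<in> D" "0 \<le> t \<and> t \<le> 1"
      then show "(1 - t) *\<^sub>R u + t *\<^sub>R v \<in> D"
        using f_real_convex_comb[of "u + x0" "v + x0" "1 - t"] by (simp add: D_def algebra_simps)
    qed
    fix t :: real and u v assume "0 < t" "t < 1" "u \<in> D" "v \<in> D"
    then show "G ((1 - t) *\<^sub>R u + t *\<^sub>R v) \<le> (1 - t) * G u + t * G v"
      using f_real_convex_comb[of "u + x0" "v + x0" "1 - t"]
      by (simp add: D_def G_def bf_simps algebra_simps)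
  qed
  moreover have "D \<noteq> {}"
    using eff_dom_nonempty by (auto simp: D_def intro: exI[of _ "_ - x0"])
  moreover have "0 \<le> G u + (norm u)\<^sup>2 / 2" if "u \<in> D" for u
    using qf_le_f_real[of "u + x0"] abs_qf_le[of u] that by (simp add: D_def G_def qf_add abs_le_iff)
  ultimately obtain \<phi> where "bounded_linear \<phi>"
    and sep: "\<And>u w. u \<in> D \<Longrightarrow> \<phi> u - \<phi> w \<le> G u + (norm w)\<^sup>2 / 2"
    by (rule sandwich_bounded_linear) auto
  then obtain b where b: "\<phi> = (\<lambda>x. bf x b)" using bf_surj by blast
  have "bf y (x0 + b) - qf bf (x0 + b) + qf bf b + (norm b)\<^sup>2 / 2 \<le> f_real y" if "y \<in> eff_dom" for y
  proof -
    have "y - x0 \<in> D" using that by (simp add: D_def)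
    then have "- bf w b \<le> (G (y - x0) - bf (y - x0) b) + (norm w)\<^sup>2 / 2" for w
      using sep[of "y - x0" w] unfolding b by simp
    then have "(norm b)\<^sup>2 / 2 \<le> G (y - x0) - bf (y - x0) b" by (rule half_power2_norm_le)
    then show ?thesis
      using sym[of x0 b] by (simp add: G_def qf_add qf_def bf_simps algebra_simps add_divide_distrib)
  qed
  then show ?thesis using that by blast
qed

lemma exists_coincidence_qf_diff_nonpos: "\<exists>a\<in>coincidence_set. qf bf (x - a) \<le> 0"
proof -
  obtain b where b: "\<And>y. y \<in> eff_dom \<Longrightarrow>
      bf y (x + b) - qf bf (x + b) + qf bf b + (norm b)\<^sup>2 / 2 \<le> f_real y"
    using exists_affine_minorant by blast
  have nonneg: "0 \<le> qf bf b + (norm b)\<^sup>2 / 2" using abs_qf_le[of b] by (simp add: abs_le_iff)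
  obtain y0 where "y0 \<in> eff_dom" using eff_dom_nonempty by blast
  then have z: "x + b \<in> coincidence_set"
    using b nonneg by (intro in_coincidence_set_if_bf_minus_qf_le) force+
  then have "x + b \<in> eff_dom" by (simp add: coincidence_set_def eff_dom_def)
  from b[OF this] z have "qf bf b + (norm b)\<^sup>2 / 2 \<le> 0"
    by (simp add: coincidence_set_def f_real_def qf_def)
  moreover have "0 \<le> (norm b)\<^sup>2 / 2" by simp
  ultimately have "qf bf b \<le> 0" by linarith
  then have "qf bf (x - (x + b)) \<le> 0" using qf_uminus[of b] by simp
  with z show ?thesis by blast
qed

lemma Phi_coincidence_set_eq: "Phi bf coincidence_set = f"
proof -
  have "ereal (qf bf x) \<le> Phi bf coincidence_set x" for x
  proof -
    obtain a where a: "a \<in> coincidence_set" "qf bf (x - a) \<le> 0"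
      using exists_coincidence_qf_diff_nonpos by blast
    have "ereal (qf bf x) \<le> ereal (bf x a - qf bf a)" using a(2) by (simp add: qf_diff)
    also have "\<dots> \<le> Phi bf coincidence_set x" unfolding Phi_def using a(1) by (rule SUP_upper)
    finally show ?thesis .
  qed
  moreover have "coincidence_set \<noteq> {}" using exists_coincidence_qf_diff_nonpos by blast
  ultimately have "Phi bf coincidence_set \<in> convex_majorants bf"
    unfolding convex_majorants_def using convex_ext_Phi by blast
  then show ?thesis using minimal Phi_coincidence_set_le by blast
qed

lemma max_q_positive_coincidence_set: "max_q_positive bf coincidence_set"
proof -
  have q_pos: "q_positive bf coincidence_set"
    unfolding q_positive_def using exists_coincidence_qf_diff_nonpos coincidence_set_qf_diff_nonneg
    by blast
  have "c \<in> coincidence_set" if "q_positive bf A" "coincidence_set \<subseteq> A" "c \<in> A" for A c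
  proof -
    have "q_positive bf (insert c coincidence_set)"
      using that unfolding q_positive_def by blast
    then have "f c \<le> ereal (qf bf c)"
      using Phi_le_qf_if_q_positive Phi_coincidence_set_eq by metis
    then show ?thesis using qf_le[of c] by (simp add: coincidence_set_def)
  qed
  then show ?thesis using q_pos unfolding max_q_positive_def by blast
qed

end

theorem mainTheorem16:
  fixes bf :: "'a::banach \<Rightarrow> 'a \<Rightarrow> real" and f :: "'a \<Rightarrow> ereal"
  assumes "SSDB bf"
    and "f \<in> convex_majorants bf"
    and "\<forall>g\<in>convex_majorants bf. (\<forall>x. g x \<le> f x) \<longrightarrow> g = f"
  shows "\<exists>M. max_q_positive bf M \<and> f = Phi bf M"
proof -
  interpret SSDB_space bf using assms(1) by (rule SSDB_space_if_SSDB)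
  interpret SSDB_minimal_majorant bf f
    using assms(2,3) by unfold_locales
  show ?thesis using max_q_positive_coincidence_set Phi_coincidence_set_eq by metis
qed

end
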